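(* Let $m,n\ge0$, $\phi=w_m^+$ and $\tau=w_n^-$. Then the minimal element (in Bruhat order) of $W_{\Lambda_1}\,I(\tau^{-1})\,\phi\,W_{\Lambda_0}$ is $w_\ell^+$, where $\ell=\max(0,m-n)$ if $m\equiv n\pmod 2$, and $\ell=\max(0,m-n-1)$ if $m\not\equiv n\pmod 2$.
   Context: $W$ is the Weyl group of the affine Kac–Moody algebra $\widehat{\mathfrak{sl}_2}$, generated by the simple reflections $s_0,s_1$; $W_{\Lambda_0}$ and $W_{\Lambda_1}$ are the stabilizers of the fundamental weights $\Lambda_0,\Lambda_1$ (generated by $s_1$, resp. $s_0$). For $k\ge0$, $w_k^+$ (resp. $w_k^-$) is the alternating product of $k$ simple reflections ending on the right with $s_0$ (resp. $s_1$), e.g. $w_3^+=s_0s_1s_0$; $w_0^\pm=1$. For $x\in W$, $I(x)=\{\sigma\in W:\sigma\le x\}$ is the Bruhat ideal generated by $x$, and for $y\in W$, $I(x)y=\{\sigma y:\sigma\in I(x)\}$. *)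

theory Defs
  imports Main "HOL-Library.Sublist"
begin

text \<open>The Weyl group W of affine sl_2 is the infinite dihedral group, the Coxeter group
 generated by s0, s1 with only relations s0^2 = s1^2 = 1 (free product Z2 * Z2).
 We represent a group element by its unique reduced word: a list over the letters
 0 (for s0) and 1 (for s1) with no two adjacent letters equal. The word is read left to
 right, so [a1,...,ak] stands for s_a1 ... s_ak.\<close>

definition reduced :: "nat list \<Rightarrow> bool" where
  "reduced w \<longleftrightarrow> set w \<subseteq> {0,1} \<and> (\<forall>i. Suc i < length w \<longrightarrow> w ! i \<noteq> w ! Suc i)"

definition Wgrp :: "nat list set" where
  "Wgrp = {w. reduced w}"

fun ev :: "nat list \<Rightarrow> nat list" where
  "ev [] = []"
| "ev (a # ws) = (case ev ws of [] \<Rightarrow> [a] | b # r \<Rightarrow> (if a = b then r else a # b # r))"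

definition wmult :: "nat list \<Rightarrow> nat list \<Rightarrow> nat list" where
  "wmult u v = ev (u @ v)"

definition winv :: "nat list \<Rightarrow> nat list" where
  "winv u = rev u"

text \<open>Bruhat order via the subword property: sigma \<le> x iff some subword of the (unique)
 reduced expression of x multiplies to sigma.\<close>
definition bruhat_le :: "nat list \<Rightarrow> nat list \<Rightarrow> bool" where
  "bruhat_le \<sigma> x \<longleftrightarrow> \<sigma> \<in> Wgrp \<and> x \<in> Wgrp \<and> (\<exists>ys. subseq ys x \<and> ev ys = \<sigma>)"

definition bruhat_ideal :: "nat list \<Rightarrow> nat list set" where
  "bruhat_ideal x = {\<sigma> \<in> Wgrp. bruhat_le \<sigma> x}"

definition W_Lambda0 :: "nat list set" where "W_Lambda0 = {[], [1]}"
definition W_Lambda1 :: "nat list set" where "W_Lambda1 = {[], [0]}"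

text \<open>w_k^+ : alternating product of k simple reflections ending on the right with s0;
 w_k^- : ending on the right with s1.\<close>
definition wplus :: "nat \<Rightarrow> nat list" where
  "wplus k = rev (map (\<lambda>j. if even j then 0 else 1) [0..<k])"
definition wminus :: "nat \<Rightarrow> nat list" where
  "wminus k = rev (map (\<lambda>j. if even j then 1 else 0) [0..<k])"

definition dcoset :: "nat list set \<Rightarrow> nat list \<Rightarrow> nat list \<Rightarrow> nat list set \<Rightarrow> nat list set" where
  "dcoset A x y B = {wmult (wmult (wmult a \<sigma>) y) b | a \<sigma> b. a \<in> A \<and> \<sigma> \<in> bruhat_ideal x \<and> b \<in> B}"

end

theory Submission
  imports Defs
begin

text \<open>The infinite dihedral group acts simply transitively on \<open>\<int>\<close>, with \<open>s\<^sub>0\<close> and \<open>s\<^sub>1\<close>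
  the reflections in \<open>-1/2\<close> and \<open>1/2\<close>; the orbit map \<open>w \<mapsto> w\<cdot>0\<close> is a bijection with
  \<open>|w\<cdot>0| = \<ell>(w)\<close>. Bruhat order is "shorter or equal", so for even \<open>l\<close> the elements above
  \<open>w\<^sub>l\<^sup>+\<close> (whose coordinate is \<open>l\<close>) are exactly those whose coordinate avoids the interval
  \<open>[-l, l-1]\<close>. This interval is stable under \<open>s\<^sub>0\<close>, and it contains no point \<open>\<sigma>\<phi>b\<cdot>0\<close>:
  \<open>\<phi>b\<cdot>0 = \<plusminus>m\<close> or \<open>\<plusminus>(m+1)\<close>, and \<open>\<sigma> \<le> \<tau>\<^sup>-\<^sup>1\<close> acts as \<open>c \<mapsto> \<plusminus>c + s\<close> with \<open>|s| < n\<close>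
  unless \<open>\<sigma> = \<tau>\<^sup>-\<^sup>1\<close>, where \<open>s = n\<close>; this last case is where the parity of \<open>m + n\<close> enters.
  The minimum is \<open>\<phi>\<close> itself if \<open>l = m\<close>, and otherwise \<open>s\<^sub>0 \<sigma> \<phi>\<close> with \<open>\<sigma>\<close> the prefix of length
  \<open>m - l - 1\<close> of \<open>\<tau>\<^sup>-\<^sup>1\<close>.\<close>

fun reflect :: "nat \<Rightarrow> int \<Rightarrow> int" where
  "reflect a c = (if a = 0 then -1 - c else 1 - c)"

definition coord :: "nat list \<Rightarrow> int" where
  "coord w = foldr reflect w 0"

lemma foldr_reflect_ev: "foldr reflect (ev w) c = foldr reflect w c"
  by (induction w) (auto split: list.splits)

lemma foldr_reflect_wmult: "foldr reflect (wmult u v) c = foldr reflect u (foldr reflect v c)"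
  by (simp add: wmult_def foldr_reflect_ev)

lemma coord_Nil [simp]: "coord [] = 0"
  by (simp add: coord_def)

lemma foldr_reflect_affine: "foldr reflect w c = (-1) ^ length w * c + coord w"
  by (induction w) (auto simp: coord_def)

lemma reduced_Nil [simp]: "reduced []"
  by (simp add: reduced_def)

lemma reduced_Cons:
  "reduced (a # w) \<longleftrightarrow> a \<in> {0, 1} \<and> reduced w \<and> (w \<noteq> [] \<longrightarrow> a \<noteq> hd w)"
  by (cases w) (auto simp: reduced_def nth_Cons split: nat.splits)

lemma hd_reduced: "reduced w \<Longrightarrow> w \<noteq> [] \<Longrightarrow> hd w = 0 \<or> hd w = 1"
  by (cases w) (auto simp: reduced_Cons)

lemma reduced_take: "reduced w \<Longrightarrow> reduced (take j w)"
  unfolding reduced_def by (auto dest: in_set_takeD)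

lemma length_ev: "length (ev w) \<le> length w"
  by (induction w) (auto split: list.splits)

lemma reduced_ev: "set w \<subseteq> {0, 1} \<Longrightarrow> reduced (ev w)"
  by (induction w) (auto split: list.splits simp: reduced_Cons)

lemma ev_reduced: "reduced w \<Longrightarrow> ev w = w"
  by (induction w) (auto simp: reduced_Cons split: list.splits)

lemma reduced_wmult: "reduced u \<Longrightarrow> reduced v \<Longrightarrow> reduced (wmult u v)"
  unfolding wmult_def by (rule reduced_ev) (auto simp: reduced_def)

lemma reduced_eqI:
  assumes "reduced u" "reduced v" "length u = length v" "u \<noteq> [] \<Longrightarrow> hd u = hd v"
  shows "u = v"
  using assms
proof (induction u arbitrary: v)
  case Nil
  then show ?case by simp
next
  case (Cons a u)
  then obtain v' where v: "v = a # v'" by (cases v) auto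
  have "u \<noteq> [] \<Longrightarrow> hd u = hd v'"
    using Cons.prems v by (cases u; cases v') (auto simp: reduced_Cons)
  then show ?case
    using Cons v by (auto simp: reduced_Cons)
qed

lemma coord_reduced:
  "reduced w \<Longrightarrow> coord w = (if w \<noteq> [] \<and> hd w = 0 then - int (length w) else int (length w))"
proof (induction w)
  case Nil
  then show ?case by simp
next
  case (Cons a w)
  show ?case
  proof (cases "w = []")
    case True
    with Cons.prems show ?thesis by (auto simp: coord_def reduced_Cons)
  next
    case False
    with Cons.prems hd_reduced[of w] have "reduced w" "a \<in> {0, 1}" "hd w = 1 - a"
      by (auto simp: reduced_Cons)
    with Cons.IH False show ?thesis by (auto simp: coord_def)
  qed
qed

lemma abs_coord_reduced: "reduced w \<Longrightarrow> \<bar>coord w\<bar> = int (length w)"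
  by (simp add: coord_reduced)

lemma coord_neg_iff: "reduced w \<Longrightarrow> coord w < 0 \<longleftrightarrow> w \<noteq> [] \<and> hd w = 0"
  by (simp add: coord_reduced)

lemma coord_inj:
  assumes "reduced u" "reduced v" "coord u = coord v"
  shows "u = v"
proof (rule reduced_eqI)
  show "length u = length v"
    using assms abs_coord_reduced by (metis of_nat_eq_iff)
  then have "v \<noteq> []" if "u \<noteq> []"
    using that by auto
  then show "hd u = hd v" if "u \<noteq> []"
    using assms that coord_neg_iff[of u] coord_neg_iff[of v] hd_reduced[of u] hd_reduced[of v]
    by auto
qed (use assms in auto)

lemma bruhat_le_iff:
  assumes x: "reduced x"
  shows "bruhat_le \<sigma> x \<longleftrightarrow> reduced \<sigma> \<and> (length \<sigma> < length x \<or> \<sigma> = x)"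
proof
  assume "bruhat_le \<sigma> x"
  then obtain ys where \<sigma>: "reduced \<sigma>" and ys: "subseq ys x" "ev ys = \<sigma>"
    by (auto simp: bruhat_le_def Wgrp_def)
  have "length \<sigma> \<le> length x"
    using length_ev[of ys] list_emb_length[OF ys(1)] ys(2) by simp
  moreover have "\<sigma> = x" if "length \<sigma> = length x"
    using subseq_same_length[OF ys(1)] length_ev[of ys] list_emb_length[OF ys(1)] ys(2) that
      ev_reduced[OF x] by simp
  ultimately show "reduced \<sigma> \<and> (length \<sigma> < length x \<or> \<sigma> = x)"
    using \<sigma> by linarith
next
  assume \<sigma>: "reduced \<sigma> \<and> (length \<sigma> < length x \<or> \<sigma> = x)"
  have "subseq \<sigma> x"
  proof (cases "\<sigma> = x \<or> \<sigma> = []")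
    case False
    with \<sigma> obtain c x' where x': "x = c # x'" and short: "length \<sigma> \<le> length x'"
      by (cases x) auto
    show ?thesis
    proof (cases "hd \<sigma> = c")
      case True
      have "take (length \<sigma>) x = \<sigma>"
        by (rule reduced_eqI) (use x \<sigma> True x' short reduced_take in \<open>auto simp: min_def\<close>)
      then show ?thesis by (metis prefix_imp_subseq take_is_prefix)
    next
      case False
      have "\<sigma> \<noteq> []" "reduced \<sigma>"
        using \<sigma> \<open>\<not> (\<sigma> = x \<or> \<sigma> = [])\<close> by auto
      moreover have x'': "x' \<noteq> []" "hd x' \<noteq> c" "c \<in> {0, 1}"
        using x x' short \<open>\<sigma> \<noteq> []\<close> by (auto simp: reduced_Cons)
      moreover have "reduced x'"
        using x x' by (simp add: reduced_Cons)
      ultimately have "hd x' = hd \<sigma>"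
        using False hd_reduced[of \<sigma>] hd_reduced[of x'] by auto
      then have "take (length \<sigma>) x' = \<sigma>"
        by (intro reduced_eqI) (use \<open>reduced x'\<close> \<sigma> short reduced_take x'' in \<open>auto simp: hd_take\<close>)
      then show ?thesis unfolding x' by (metis list_emb_Cons prefix_imp_subseq take_is_prefix)
    qed
  qed auto
  then show "bruhat_le \<sigma> x"
    using x \<sigma> ev_reduced by (auto simp: bruhat_le_def Wgrp_def)
qed

lemma wplus_Suc: "wplus (Suc k) = (if even k then 0 else 1) # wplus k"
  by (simp add: wplus_def)

lemma length_wplus [simp]: "length (wplus k) = k"
  by (simp add: wplus_def)

lemma reduced_wplus: "reduced (wplus k)"
proof (induction k)
  case (Suc k)
  have "hd (wplus k) = (if even k then 1 else 0)" if "wplus k \<noteq> []"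
    using that by (cases k) (auto simp: wplus_Suc wplus_def)
  with Suc show ?case
    by (auto simp: wplus_Suc reduced_Cons)
qed (simp add: wplus_def)

lemma coord_wplus: "coord (wplus k) = (-1) ^ k * int k"
  by (induction k) (auto simp: wplus_Suc coord_def wplus_def[of 0])

lemma winv_wminus: "winv (wminus n) = map (\<lambda>i. if even i then 1 else 0) [0..<n]"
  by (simp add: winv_def wminus_def)

lemma reduced_winv_wminus: "reduced (winv (wminus n))"
  by (auto simp: winv_wminus reduced_def)

lemma length_winv_wminus [simp]: "length (winv (wminus n)) = n"
  by (simp add: winv_wminus)

lemma coord_winv_wminus: "coord (winv (wminus n)) = int n"
  using reduced_winv_wminus[of n]
  by (cases n) (simp_all add: coord_reduced winv_wminus upt_conv_Cons del: upt_Suc)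

lemma bruhat_ideal_iff:
  "reduced x \<Longrightarrow> \<sigma> \<in> bruhat_ideal x \<longleftrightarrow> reduced \<sigma> \<and> (length \<sigma> < length x \<or> \<sigma> = x)"
  by (auto simp: bruhat_ideal_def Wgrp_def bruhat_le_iff)

lemma coord_dcoset_element:
  "coord (wmult (wmult (wmult a \<sigma>) \<phi>) b) = foldr reflect a (foldr reflect \<sigma> (foldr reflect \<phi> (coord b)))"
  by (simp add: coord_def foldr_reflect_wmult)

lemma outside_gap_arith:
  fixes k m n l :: nat and s y :: int
  assumes \<sigma>: "(k < n \<and> \<bar>s\<bar> = int k) \<or> (k = n \<and> s = int n)"
    and y: "y = int m \<or> y = int m + 1"
    and gap: "l = 0 \<or> l + n \<le> m" and gap_odd: "odd (m + n) \<Longrightarrow> l = 0 \<or> l + n < m"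
  shows "int l \<le> (-1) ^ (k + m) * y + s \<or> (-1) ^ (k + m) * y + s < - int l"
proof (cases "l = 0")
  case False
  show ?thesis
  proof (cases "even (k + m)")
    case True
    then have "(-1) ^ (k + m) * y + s \<ge> int m - int k"
      using \<sigma> y by auto
    then show ?thesis using gap False \<sigma> by auto
  next
    case odd: False
    then have "(-1) ^ (k + m) * y + s \<le> - int m + s"
      using y by auto
    moreover have "s < int n \<or> (k = n \<and> s = int n)"
      using \<sigma> by auto
    ultimately show ?thesis
      using gap gap_odd False odd by auto
  qed
qed auto

lemma bruhat_le_wplus_if_outside_gap:
  assumes l: "even l" and X: "reduced X" and outside: "int l \<le> coord X \<or> coord X < - int l"
  shows "bruhat_le (wplus l) X"
proof -
  have "length X > l \<or> coord X = coord (wplus l)"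
    using outside abs_coord_reduced[OF X] l by (auto simp: coord_wplus)
  then have "length (wplus l) < length X \<or> wplus l = X"
    using coord_inj[OF reduced_wplus X] by auto
  then show ?thesis
    using bruhat_le_iff[OF X] reduced_wplus by blast
qed

lemma dcoset_outside_gap:
  assumes gap: "l = 0 \<or> l + n \<le> m" and gap_odd: "odd (m + n) \<Longrightarrow> l = 0 \<or> l + n < m"
    and X: "X \<in> dcoset W_Lambda1 (winv (wminus n)) (wplus m) W_Lambda0"
  shows "reduced X \<and> (int l \<le> coord X \<or> coord X < - int l)"
proof -
  obtain a \<sigma> b where X_eq: "X = wmult (wmult (wmult a \<sigma>) (wplus m)) b"
    and a: "a = [] \<or> a = [0]" and b: "b = [] \<or> b = [1]"
    and \<sigma>: "\<sigma> \<in> bruhat_ideal (winv (wminus n))"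
    using X unfolding dcoset_def W_Lambda0_def W_Lambda1_def by blast
  have \<sigma>_cases: "reduced \<sigma>" "length \<sigma> < n \<or> \<sigma> = winv (wminus n)"
    using \<sigma> bruhat_ideal_iff[OF reduced_winv_wminus] by auto
  define y where "y = int m + coord b"
  have y: "y = int m \<or> y = int m + 1"
    using b by (auto simp: y_def coord_def)
  have "foldr reflect (wplus m) (coord b) = (-1) ^ m * y"
    by (simp add: foldr_reflect_affine coord_wplus y_def algebra_simps)
  then have "foldr reflect \<sigma> (foldr reflect (wplus m) (coord b))
      = (-1) ^ (length \<sigma> + m) * y + coord \<sigma>"
    by (simp add: foldr_reflect_affine power_add)
  moreover have "(length \<sigma> < n \<and> \<bar>coord \<sigma>\<bar> = int (length \<sigma>)) \<or> (length \<sigma> = n \<and> coord \<sigma> = int n)"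
    using \<sigma>_cases abs_coord_reduced coord_winv_wminus by auto
  ultimately have "int l \<le> foldr reflect \<sigma> (foldr reflect (wplus m) (coord b))
      \<or> foldr reflect \<sigma> (foldr reflect (wplus m) (coord b)) < - int l"
    using outside_gap_arith[OF _ y gap gap_odd] by metis
  then have "int l \<le> coord X \<or> coord X < - int l"
    unfolding X_eq coord_dcoset_element using a by auto
  moreover have "reduced X"
    unfolding X_eq using a b \<sigma>_cases(1)
    by (intro reduced_wmult reduced_wplus) (auto simp: reduced_Cons)
  ultimately show ?thesis by blast
qed

lemma dcosetI:
  "a \<in> A \<Longrightarrow> \<sigma> \<in> bruhat_ideal x \<Longrightarrow> b \<in> B \<Longrightarrow> wmult (wmult (wmult a \<sigma>) y) b \<in> dcoset A x y B"
  unfolding dcoset_def by blast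

lemma wplus_in_dcoset:
  assumes l: "even l" "l \<le> m" "m \<le> l + n + 1"
  shows "wplus l \<in> dcoset W_Lambda1 (winv (wminus n)) (wplus m) W_Lambda0"
proof (cases "l = m")
  case True
  have "wplus m = wmult (wmult (wmult [] []) (wplus m)) []"
    by (simp add: wmult_def ev_reduced reduced_wplus)
  moreover have "[] \<in> bruhat_ideal (winv (wminus n))"
    using bruhat_ideal_iff[OF reduced_winv_wminus, of "[]" n]
    by (cases n) (simp_all add: winv_def wminus_def)
  ultimately show ?thesis
    unfolding True by (metis dcosetI W_Lambda0_def W_Lambda1_def insertI1)
next
  case False
  define j where "j = m - l - 1"
  define X where "X = wmult (wmult (wmult [0] (winv (wminus j))) (wplus m)) []"
  have j: "int j = int m - int l - 1" "odd (j + m)"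
    using l False by (auto simp: j_def)
  have "coord X = -1 - ((-1) ^ j * ((-1) ^ m * int m) + int j)"
    by (simp add: X_def coord_dcoset_element foldr_reflect_affine coord_wplus coord_winv_wminus)
  also have "\<dots> = -1 - ((-1) ^ (j + m) * int m + int j)"
    by (simp add: power_add)
  also have "\<dots> = int l"
    using j by simp
  finally have "coord X = coord (wplus l)"
    using l(1) by (simp add: coord_wplus)
  moreover have "reduced X"
    unfolding X_def by (intro reduced_wmult reduced_winv_wminus reduced_wplus) (simp_all add: reduced_Cons)
  ultimately have "X = wplus l"
    using coord_inj reduced_wplus by blast
  moreover have "j \<le> n"
    using l by (simp add: j_def)
  then have "winv (wminus j) \<in> bruhat_ideal (winv (wminus n))"
    using bruhat_ideal_iff[OF reduced_winv_wminus] reduced_winv_wminus[of j]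
    by (cases "j = n") auto
  ultimately show ?thesis
    unfolding X_def W_Lambda0_def W_Lambda1_def by (metis dcosetI insertI1 insertI2)
qed

theorem mainTheorem8:
  fixes m n :: nat
  defines "\<phi> \<equiv> wplus m" and "\<tau> \<equiv> wminus n"
  defines "l \<equiv> (if even (m + n) then nat (max 0 (int m - int n))
                  else nat (max 0 (int m - int n - 1)))"
  shows "wplus l \<in> dcoset W_Lambda1 (winv \<tau>) \<phi> W_Lambda0
       \<and> (\<forall>\<sigma> \<in> dcoset W_Lambda1 (winv \<tau>) \<phi> W_Lambda0. bruhat_le (wplus l) \<sigma>)"
proof -
  have l: "l = (if even (m + n) then m - n else m - n - 1)"
    unfolding l_def by auto
  then have l_even: "even l" and l_range: "l \<le> m" "m \<le> l + n + 1"
    by presburger+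
  have gap: "l = 0 \<or> l + n \<le> m" and gap_odd: "odd (m + n) \<Longrightarrow> l = 0 \<or> l + n < m"
    using l by presburger+
  show ?thesis
    unfolding \<phi>_def \<tau>_def
  proof (intro conjI ballI)
    show "wplus l \<in> dcoset W_Lambda1 (winv (wminus n)) (wplus m) W_Lambda0"
      using l_even l_range by (rule wplus_in_dcoset)
  next
    fix X
    assume "X \<in> dcoset W_Lambda1 (winv (wminus n)) (wplus m) W_Lambda0"
    then show "bruhat_le (wplus l) X"
      using dcoset_outside_gap[OF gap gap_odd] bruhat_le_wplus_if_outside_gap[OF l_even] by blast
  qed
qed

end
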